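(* Let $N\ge 2$, $g=N-1$, and let $a_1,\dots,a_N\in\mathbb{C}$ be fixed, $Q(\lambda)=\prod_{i=1}^N(\lambda-a_i)$. Consider the operators $\lambda_1,\dots,\lambda_g$ (multiplication operators) and $\mu_j=i\hbar\,\partial/\partial\lambda_j$, acting on smooth functions on the open set of $\mathbb{C}^g$ (or $\mathbb{R}^g$) where the $\lambda_j$ are pairwise distinct; they satisfy $[\mu_j,\lambda_k]=i\hbar\,\delta_{jk}$, $[\lambda_j,\lambda_k]=[\mu_j,\mu_k]=0$. With $S_j(\lambda)=\prod_{k\neq j}(\lambda-\lambda_k)/\prod_{k\neq j}(\lambda_j-\lambda_k)$, define the operator-valued polynomial in $\lambda$ $$P(\lambda)=\prod_{i=1}^g(\lambda-\lambda_i)+\sum_{j=1}^g S_j(\lambda)\,Q(\lambda_j)\,\mu_j^2,$$ (with the functions of $\lambda_1,\dots,\lambda_g$ placed to the left of $\mu_j^2$). Then $[P(\lambda),P(\lambda')]=0$ for all $\lambda,\lambda'\in\mathbb{C}$.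
   Context: $P(\lambda)$ is the monic polynomial of degree $g$ solving the quantum Baxter equations $P(\lambda_i)=Q(\lambda_i)\mu_i^2$ for the spectral curve $\mu^2=P(\lambda)/Q(\lambda)$ of the Neumann model; its non-leading coefficients are the Hamiltonians. *)

theory Defs
  imports "HOL-Analysis.Analysis"
begin

text \<open>Coordinates lambda_1..lambda_g are the components of x :: real^'g, g = CARD('g).\<close>

definition pd :: "'g::finite \<Rightarrow> (real^'g \<Rightarrow> complex) \<Rightarrow> real^'g \<Rightarrow> complex" where
  "pd j f x = vector_derivative (\<lambda>t. f (x + t *\<^sub>R axis j 1)) (at 0)"

fun iter_pd :: "'g::finite list \<Rightarrow> (real^'g \<Rightarrow> complex) \<Rightarrow> real^'g \<Rightarrow> complex" where
  "iter_pd [] f = f"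
| "iter_pd (j # js) f = pd j (iter_pd js f)"

definition smooth_on :: "(real^'g::finite) set \<Rightarrow> (real^'g \<Rightarrow> complex) \<Rightarrow> bool" where
  "smooth_on U f \<longleftrightarrow> (\<forall>js. \<forall>x\<in>U. iter_pd js f differentiable (at x))"

definition distinct_coords :: "(real^'g::finite) set" where
  "distinct_coords = {x. \<forall>j k. j \<noteq> k \<longrightarrow> x $ j \<noteq> x $ k}"

definition Qpoly :: "(nat \<Rightarrow> complex) \<Rightarrow> nat \<Rightarrow> complex \<Rightarrow> complex" where
  "Qpoly a N z = (\<Prod>i=1..N. (z - a i))"

definition Spoly :: "'g::finite \<Rightarrow> real^'g \<Rightarrow> complex \<Rightarrow> complex" where
  "Spoly j x l = (\<Prod>k\<in>UNIV - {j}. (l - complex_of_real (x $ k)))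
               / (\<Prod>k\<in>UNIV - {j}. complex_of_real (x $ j - x $ k))"

definition P_op :: "real \<Rightarrow> (nat \<Rightarrow> complex) \<Rightarrow> complex \<Rightarrow> (real^'g::finite \<Rightarrow> complex) \<Rightarrow> real^'g \<Rightarrow> complex" where
  "P_op hbar a l f x =
     (\<Prod>i\<in>UNIV. (l - complex_of_real (x $ i))) * f x
     + (\<Sum>j\<in>UNIV. Spoly j x l * Qpoly a (CARD('g) + 1) (complex_of_real (x $ j))
                   * (\<i> * complex_of_real hbar)^2 * pd j (pd j f) x)"

end

(* Along the coordinate line through a point in direction j, every coefficient of P(lambda)
   changes by prod_{i<>j} (lambda - lambda_i) times a function that does not depend on lambda:
   for prod_i (lambda - lambda_i) this is clear, and for S_k(lambda) Q(lambda_k), k <> j, it is the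
   partial fraction (lambda - lambda_j)/(lambda_k - lambda_j) = 1 + (lambda - lambda_k)/(lambda_k - lambda_j).
   The coefficient S_j(lambda) Q(lambda_j) of mu_j^2 is itself prod_{i<>j} (lambda - lambda_i) times a
   lambda-independent factor. Hence, after expanding P(lambda) P(lambda') f by the Leibniz rule, every
   term is visibly symmetric in lambda and lambda' except the fourth-order one
   sum_{j,k} S_j(lambda) Q(lambda_j) S_k(lambda') Q(lambda_k) d_j^2 d_k^2 f, which is symmetric by the
   symmetry of mixed partial derivatives. *)

theory Submission
  imports Defs "HOL-Complex_Analysis.Cauchy_Integral_Formula"
begin

section \<open>Second-order jets of curves\<close>

text \<open>The partial derivative \<^const>\<open>pd\<close> only sees the restriction of a function to a coordinate
  line, and the coefficients of \<^const>\<open>P_op\<close> are smooth only off the diagonals, so the Leibniz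
  rule for \<open>pd j (pd j (u * v))\<close> is derived from one-variable calculus along the line.\<close>

definition has_jet2 :: "(real \<Rightarrow> 'a::real_normed_field) \<Rightarrow> 'a \<Rightarrow> 'a \<Rightarrow> 'a \<Rightarrow> bool" where
  "has_jet2 \<phi> c0 c1 c2 \<longleftrightarrow> \<phi> 0 = c0 \<and>
     (\<exists>e>0. \<exists>\<phi>'. (\<forall>s. \<bar>s\<bar> < e \<longrightarrow> (\<phi> has_vector_derivative \<phi>' s) (at s))
                 \<and> \<phi>' 0 = c1 \<and> (\<phi>' has_vector_derivative c2) (at 0))"

lemma has_jet2_affine: "has_jet2 (\<lambda>s. \<alpha> + \<beta> * of_real s) \<alpha> \<beta> 0"
  unfolding has_jet2_def
  by (auto intro!: exI[of _ 1] exI[of _ "\<lambda>s. \<beta>"] derivative_eq_intros)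

lemma has_jet2_add:
  assumes "has_jet2 \<phi> u0 u1 u2" "has_jet2 \<psi> v0 v1 v2"
  shows "has_jet2 (\<lambda>s. \<phi> s + \<psi> s) (u0 + v0) (u1 + v1) (u2 + v2)"
proof -
  obtain e1 \<phi>' where "e1 > 0" "\<phi> 0 = u0" "\<And>s. \<bar>s\<bar> < e1 \<Longrightarrow> (\<phi> has_vector_derivative \<phi>' s) (at s)"
    "\<phi>' 0 = u1" "(\<phi>' has_vector_derivative u2) (at 0)"
    using assms(1) unfolding has_jet2_def by blast
  moreover obtain e2 \<psi>' where "e2 > 0" "\<psi> 0 = v0" "\<And>s. \<bar>s\<bar> < e2 \<Longrightarrow> (\<psi> has_vector_derivative \<psi>' s) (at s)"
    "\<psi>' 0 = v1" "(\<psi>' has_vector_derivative v2) (at 0)"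
    using assms(2) unfolding has_jet2_def by blast
  ultimately show ?thesis
    unfolding has_jet2_def
    by (intro conjI exI[of _ "min e1 e2"] exI[of _ "\<lambda>s. \<phi>' s + \<psi>' s"])
       (auto intro!: derivative_eq_intros)
qed

lemma has_jet2_mult:
  assumes "has_jet2 \<phi> u0 u1 u2" "has_jet2 \<psi> v0 v1 v2"
  shows "has_jet2 (\<lambda>s. \<phi> s * \<psi> s) (u0 * v0) (u0 * v1 + u1 * v0) (u0 * v2 + 2 * u1 * v1 + u2 * v0)"
proof -
  obtain e1 \<phi>' where "e1 > 0" "\<phi> 0 = u0" "\<phi>' 0 = u1" "(\<phi>' has_vector_derivative u2) (at 0)"
    and \<phi>': "\<And>s. \<bar>s\<bar> < e1 \<Longrightarrow> (\<phi> has_vector_derivative \<phi>' s) (at s)"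
    using assms(1) unfolding has_jet2_def by blast
  moreover obtain e2 \<psi>' where "e2 > 0" "\<psi> 0 = v0" "\<psi>' 0 = v1" "(\<psi>' has_vector_derivative v2) (at 0)"
    and \<psi>': "\<And>s. \<bar>s\<bar> < e2 \<Longrightarrow> (\<psi> has_vector_derivative \<psi>' s) (at s)"
    using assms(2) unfolding has_jet2_def by blast
  moreover have "(\<phi> has_vector_derivative u1) (at 0)" "(\<psi> has_vector_derivative v1) (at 0)"
    using \<phi>'[of 0] \<psi>'[of 0] calculation by auto
  ultimately show ?thesis
    unfolding has_jet2_def
    by (intro conjI exI[of _ "min e1 e2"] exI[of _ "\<lambda>s. \<phi> s * \<psi>' s + \<phi>' s * \<psi> s"])
       (auto intro!: derivative_eq_intros simp: algebra_simps)
qed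

lemma has_jet2_sum:
  assumes "finite K" "\<And>k. k \<in> K \<Longrightarrow> has_jet2 (\<phi> k) (c0 k) (c1 k) (c2 k)"
  shows "has_jet2 (\<lambda>s. \<Sum>k\<in>K. \<phi> k s) (\<Sum>k\<in>K. c0 k) (\<Sum>k\<in>K. c1 k) (\<Sum>k\<in>K. c2 k)"
  using assms
proof (induction K rule: finite_induct)
  case empty
  then show ?case using has_jet2_affine[of 0 0] by simp
next
  case (insert k K)
  then show ?case using has_jet2_add[of "\<phi> k"] by simp
qed

lemma has_jet2_holomorphic:
  assumes "open S" "0 \<in> S" "r holomorphic_on S"
    and "\<And>s. complex_of_real s \<in> S \<Longrightarrow> \<phi> s = \<alpha> + \<beta> * r (of_real s)"
  shows "has_jet2 \<phi> (\<phi> 0) (\<beta> * deriv r 0) (\<beta> * deriv (deriv r) 0)"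
proof -
  obtain e where e: "e > 0" "ball 0 e \<subseteq> S" using assms(1,2) openE by blast
  have inS: "complex_of_real s \<in> S" if "\<bar>s\<bar> < e" for s
    using that e by (auto simp: dist_norm)
  have "deriv r holomorphic_on S" using assms(3,1) by (rule holomorphic_deriv)
  then have "((\<lambda>s. deriv r (of_real s)) has_vector_derivative deriv (deriv r) (of_real 0)) (at 0)"
    by (intro has_vector_derivative_real_field holomorphic_derivI) (use assms(1,2) in auto)
  then have r'': "((\<lambda>s. deriv r (of_real s)) has_vector_derivative deriv (deriv r) 0) (at 0)"
    by simp
  have "(\<phi> has_vector_derivative \<beta> * deriv r (of_real s)) (at s)" if "\<bar>s\<bar> < e" for s
  proof (rule has_vector_derivative_transform_within_open[of _ _ _ "ball 0 e"])
    show "((\<lambda>t. \<alpha> + \<beta> * r (of_real t)) has_vector_derivative \<beta> * deriv r (of_real s)) (at s)"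
      using has_vector_derivative_real_field[OF holomorphic_derivI[OF assms(3,1) inS[OF that]]]
      by (auto intro!: derivative_eq_intros)
  qed (use that inS assms(4) in \<open>auto simp: dist_norm\<close>)
  with e(1) r'' show ?thesis
    unfolding has_jet2_def
    by (intro conjI exI[of _ e] exI[of _ "\<lambda>s. \<beta> * deriv r (of_real s)"])
       (auto intro!: derivative_eq_intros)
qed

lemma has_vector_derivative_along_line:
  fixes G :: "'a::real_normed_vector \<Rightarrow> 'b::real_normed_vector"
  assumes "G differentiable at (x + s *\<^sub>R v)"
  shows "((\<lambda>t. G (x + t *\<^sub>R v)) has_vector_derivative frechet_derivative G (at (x + s *\<^sub>R v)) v) (at s)"
proof -
  let ?G' = "frechet_derivative G (at (x + s *\<^sub>R v))"
  have G': "(G has_derivative ?G') (at (x + s *\<^sub>R v))"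
    using assms frechet_derivative_works by blast
  have "((\<lambda>t. x + t *\<^sub>R v) has_derivative (\<lambda>t. t *\<^sub>R v)) (at s)"
    by (auto intro!: derivative_eq_intros)
  then have "((G \<circ> (\<lambda>t. x + t *\<^sub>R v)) has_derivative (?G' \<circ> (\<lambda>t. t *\<^sub>R v))) (at s)"
    by (rule diff_chain_at) (simp add: G')
  moreover have "?G' \<circ> (\<lambda>t. t *\<^sub>R v) = (\<lambda>t. t *\<^sub>R ?G' v)"
    using G' has_derivative_linear linear_cmul by (metis comp_apply)
  ultimately show ?thesis
    by (simp add: has_vector_derivative_def o_def)
qed

lemma pd_eq_frechet_derivative:
  fixes G :: "real^'g::finite \<Rightarrow> complex"
  assumes "G differentiable at x"
  shows "pd j G x = frechet_derivative G (at x) (axis j 1)"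
  unfolding pd_def using has_vector_derivative_along_line[of G x 0] assms
  by (auto intro: vector_derivative_at)

lemma has_vector_derivative_pd:
  fixes G :: "real^'g::finite \<Rightarrow> complex"
  assumes "G differentiable at (x + s *\<^sub>R axis j 1)"
  shows "((\<lambda>t. G (x + t *\<^sub>R axis j 1)) has_vector_derivative pd j G (x + s *\<^sub>R axis j 1)) (at s)"
  using has_vector_derivative_along_line[OF assms] pd_eq_frechet_derivative[OF assms] by simp

lemma pd_cong_open:
  fixes G H :: "real^'g::finite \<Rightarrow> complex"
  assumes "open U" "x \<in> U" "\<And>y. y \<in> U \<Longrightarrow> G y = H y"
  shows "pd j G x = pd j H x"
proof -
  have "((\<lambda>t. x + t *\<^sub>R axis j 1) \<longlongrightarrow> x) (nhds 0)"
    by (auto intro!: tendsto_eq_intros filterlim_ident)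
  then have "\<forall>\<^sub>F t in nhds 0. x + t *\<^sub>R axis j 1 \<in> U"
    by (rule eventually_compose_filterlim[OF eventually_nhds_in_open[OF assms(1,2)]])
  then show ?thesis
    unfolding pd_def
    by (intro vector_derivative_cong_eq) (auto elim!: eventually_mono simp: assms(3))
qed

lemma has_jet2_imp_pd_pd:
  fixes G :: "real^'g::finite \<Rightarrow> complex"
  assumes "has_jet2 (\<lambda>t. G (x + t *\<^sub>R axis j 1)) c0 c1 c2"
  shows "pd j (pd j G) x = c2"
proof -
  obtain e \<phi>' where e: "e > 0"
    and \<phi>': "\<And>s. \<bar>s\<bar> < e \<Longrightarrow> ((\<lambda>t. G (x + t *\<^sub>R axis j 1)) has_vector_derivative \<phi>' s) (at s)"
    and \<phi>'': "(\<phi>' has_vector_derivative c2) (at 0)"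
    using assms unfolding has_jet2_def by blast
  have pd_line: "pd j G (x + s *\<^sub>R axis j 1) = \<phi>' s" if "\<bar>s\<bar> < e" for s
  proof -
    have "((\<lambda>t. s + t) has_vector_derivative 1) (at 0)"
      by (auto intro!: derivative_eq_intros)
    from vector_diff_chain_at[OF this] have
      "((\<lambda>t. G (x + (s + t) *\<^sub>R axis j 1)) has_vector_derivative \<phi>' s) (at 0)"
      using \<phi>'[OF that] by (simp add: o_def)
    then show ?thesis
      unfolding pd_def by (intro vector_derivative_at) (simp add: scaleR_add_left add.assoc)
  qed
  have "((\<lambda>t. pd j G (x + t *\<^sub>R axis j 1)) has_vector_derivative c2) (at 0)"
    by (rule has_vector_derivative_transform_within_open[OF \<phi>'', of "ball 0 e"])
       (use e pd_line in auto)
  then show ?thesis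
    unfolding pd_def[of j "pd j G"] by (rule vector_derivative_at)
qed

lemma has_jet2_along_line_pd:
  fixes f :: "real^'g::finite \<Rightarrow> complex"
  assumes "open U" "x \<in> U" "\<And>y. y \<in> U \<Longrightarrow> f differentiable at y"
    "\<And>y. y \<in> U \<Longrightarrow> pd j f differentiable at y"
  shows "has_jet2 (\<lambda>t. f (x + t *\<^sub>R axis j 1)) (f x) (pd j f x) (pd j (pd j f) x)"
proof -
  obtain e where e: "e > 0" "ball x e \<subseteq> U" using assms(1,2) openE by blast
  have "x + s *\<^sub>R axis j 1 \<in> U" if "\<bar>s\<bar> < e" for s
    using that e by (auto simp: dist_norm)
  then show ?thesis
    unfolding has_jet2_def
    using e(1) has_vector_derivative_pd[of f x _ j] has_vector_derivative_pd[of "pd j f" x 0 j] assms(2-4)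
    by (intro conjI exI[of _ e] exI[of _ "\<lambda>s. pd j f (x + s *\<^sub>R axis j 1)"]) auto
qed

section \<open>Symmetry of mixed partial derivatives\<close>

lemma second_difference_estimate:
  fixes h :: "real^'g::finite \<Rightarrow> complex"
  assumes dh: "\<And>y. y \<in> ball x r \<Longrightarrow> h differentiable at y"
    and Da: "linear Da" and \<epsilon>: "\<epsilon> > 0"
    and approx: "\<And>y. norm (y - x) < d \<Longrightarrow> norm (pd a h y - pd a h x - Da (y - x)) \<le> \<epsilon> * norm (y - x)"
    and t: "0 < t" "2 * t < d" "2 * t < r"
  shows "norm (h (x + t *\<^sub>R axis b 1 + t *\<^sub>R axis a 1) - h (x + t *\<^sub>R axis a 1)
                - h (x + t *\<^sub>R axis b 1) + h x - (t * t) *\<^sub>R Da (axis b 1)) \<le> 3 * \<epsilon> * (t * t)"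
proof -
  let ?ea = "axis a 1 :: real^'g" and ?eb = "axis b 1 :: real^'g"
  define F where "F s = h (x + t *\<^sub>R ?eb + s *\<^sub>R ?ea) - h (x + s *\<^sub>R ?ea) - (s * t) *\<^sub>R Da ?eb" for s
  define F' where "F' s = pd a h (x + t *\<^sub>R ?eb + s *\<^sub>R ?ea) - pd a h (x + s *\<^sub>R ?ea) - t *\<^sub>R Da ?eb" for s
  have norm_v1: "norm (t *\<^sub>R ?eb + s *\<^sub>R ?ea) \<le> 2 * t" and norm_v2: "norm (s *\<^sub>R ?ea) \<le> t"
    if "0 \<le> s" "s \<le> t" for s
    using norm_triangle_ineq[of "t *\<^sub>R ?eb" "s *\<^sub>R ?ea"] that t by auto
  have F': "(F has_vector_derivative F' s) (at s)" if "0 \<le> s" "s \<le> t" for s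
  proof -
    have "dist x (x + v) = norm v" for v :: "real^'g"
      using dist_add_cancel[of x 0 v] by simp
    then have "x + t *\<^sub>R ?eb + s *\<^sub>R ?ea \<in> ball x r" "x + s *\<^sub>R ?ea \<in> ball x r"
      using norm_v1[OF that] norm_v2[OF that] t by (auto simp: add.assoc)
    then show ?thesis
      unfolding F_def F'_def using dh
      by (intro has_vector_derivative_diff has_vector_derivative_pd)
         (auto intro!: derivative_eq_intros)
  qed
  have "norm (F' s) \<le> 3 * \<epsilon> * t" if "0 < s" "s < t" for s
  proof -
    define v1 where "v1 = t *\<^sub>R ?eb + s *\<^sub>R ?ea"
    define v2 where "v2 = s *\<^sub>R ?ea"
    have "F' s = (pd a h (x + v1) - pd a h x - Da v1) - (pd a h (x + v2) - pd a h x - Da v2)"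
      unfolding F'_def v1_def v2_def linear_add[OF Da] linear_cmul[OF Da]
      by (simp add: algebra_simps)
    then have "norm (F' s) \<le> norm (pd a h (x + v1) - pd a h x - Da v1) + norm (pd a h (x + v2) - pd a h x - Da v2)"
      by (simp only: norm_triangle_ineq4)
    also have "\<dots> \<le> \<epsilon> * norm v1 + \<epsilon> * norm v2"
      using approx[of "x + v1"] approx[of "x + v2"] norm_v1[of s] norm_v2[of s] that t
      unfolding v1_def v2_def by (intro add_mono) auto
    also have "\<dots> \<le> \<epsilon> * (2 * t) + \<epsilon> * t"
      using norm_v1[of s] norm_v2[of s] that \<epsilon>
      unfolding v1_def v2_def by (intro add_mono mult_left_mono) auto
    finally show ?thesis by simp
  qed
  then have "norm (F t - F 0) \<le> (3 * \<epsilon> * t) * t - (3 * \<epsilon> * t) * 0"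
    using t F' by (intro differentiable_bound_general[where f' = F' and \<phi>' = "\<lambda>_. 3 * \<epsilon> * t"])
      (auto intro!: derivative_eq_intros continuous_at_imp_continuous_on
            has_vector_derivative_continuous)
  then show ?thesis
    unfolding F_def by (simp add: algebra_simps)
qed

lemma second_difference_tendsto:
  fixes h :: "real^'g::finite \<Rightarrow> complex"
  assumes "r > 0" "\<And>y. y \<in> ball x r \<Longrightarrow> h differentiable at y"
    and Da: "(pd a h has_derivative Da) (at x)"
  shows "((\<lambda>t. (h (x + t *\<^sub>R axis b 1 + t *\<^sub>R axis a 1) - h (x + t *\<^sub>R axis a 1)
                - h (x + t *\<^sub>R axis b 1) + h x) /\<^sub>R (t * t)) \<longlongrightarrow> Da (axis b 1)) (at_right 0)"
  unfolding tendsto_iff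
proof (intro allI impI)
  fix e :: real assume "e > 0"
  then obtain d where d: "d > 0" and approx: "\<And>y. norm (y - x) < d \<Longrightarrow>
      norm (pd a h y - pd a h x - Da (y - x)) \<le> e / 6 * norm (y - x)"
    using Da unfolding has_derivative_at_alt by (metis zero_less_divide_iff zero_less_numeral)
  define \<Delta> where "\<Delta> t = h (x + t *\<^sub>R axis b 1 + t *\<^sub>R axis a 1) - h (x + t *\<^sub>R axis a 1)
                - h (x + t *\<^sub>R axis b 1) + h x" for t
  have "dist (\<Delta> t /\<^sub>R (t * t)) (Da (axis b 1)) < e" if "0 < t" "t < min d r / 2" for t
  proof -
    have "\<Delta> t /\<^sub>R (t * t) - Da (axis b 1) = (\<Delta> t - (t * t) *\<^sub>R Da (axis b 1)) /\<^sub>R (t * t)"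
      using that by (simp add: scaleR_diff_right field_simps)
    then have "dist (\<Delta> t /\<^sub>R (t * t)) (Da (axis b 1)) = norm (\<Delta> t - (t * t) *\<^sub>R Da (axis b 1)) / (t * t)"
      by (simp add: dist_norm divide_inverse_commute)
    also have "\<dots> \<le> 3 * (e / 6)"
      using second_difference_estimate[OF assms(2) has_derivative_linear[OF Da] _ approx] that \<open>e > 0\<close>
      by (simp add: \<Delta>_def divide_le_eq)
    finally show ?thesis using \<open>e > 0\<close> by simp
  qed
  then show "\<forall>\<^sub>F t in at_right 0. dist (\<Delta> t /\<^sub>R (t * t)) (Da (axis b 1)) < e"
    unfolding eventually_at_right_field using d \<open>r > 0\<close>
    by (intro exI[of _ "min d r / 2"]) auto
qed

text \<open>The second difference is symmetric in \<open>a\<close> and \<open>b\<close>, so both mixed partials are its limit.\<close>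

lemma pd_pd_commute:
  fixes h :: "real^'g::finite \<Rightarrow> complex"
  assumes "open U" "x \<in> U" "\<And>y. y \<in> U \<Longrightarrow> h differentiable at y"
    and "pd a h differentiable at x" "pd b h differentiable at x"
  shows "pd b (pd a h) x = pd a (pd b h) x"
proof -
  obtain r where r: "r > 0" "ball x r \<subseteq> U" using assms(1,2) openE by blast
  have dh: "\<And>y. y \<in> ball x r \<Longrightarrow> h differentiable at y" using r assms(3) by blast
  let ?\<Delta> = "\<lambda>t. (h (x + t *\<^sub>R axis b 1 + t *\<^sub>R axis a 1) - h (x + t *\<^sub>R axis a 1)
                - h (x + t *\<^sub>R axis b 1) + h x) /\<^sub>R (t * t)"
  have "(?\<Delta> \<longlongrightarrow> pd b (pd a h) x) (at_right 0)"
    using second_difference_tendsto[OF r(1) dh frechet_derivative_works[THEN iffD1, OF assms(4)]]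
    by (simp add: pd_eq_frechet_derivative[OF assms(4)])
  moreover have "(?\<Delta> \<longlongrightarrow> pd a (pd b h) x) (at_right 0)"
    using second_difference_tendsto[OF r(1) dh frechet_derivative_works[THEN iffD1, OF assms(5)], of a]
    by (simp add: pd_eq_frechet_derivative[OF assms(5)] algebra_simps)
  ultimately show ?thesis
    by (rule tendsto_unique[OF trivial_limit_at_right_real])
qed

lemma iter_pd_append: "iter_pd (js @ [j]) f = iter_pd js (pd j f)"
  by (induction js) auto

lemma smooth_on_pd: "smooth_on U f \<Longrightarrow> smooth_on U (pd j f)"
  unfolding smooth_on_def by (metis iter_pd_append)

lemma smooth_on_imp_differentiable: "smooth_on U f \<Longrightarrow> x \<in> U \<Longrightarrow> f differentiable at x"
  unfolding smooth_on_def by (metis iter_pd.simps(1))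

lemma smooth_on_pd_pd_commute:
  assumes "smooth_on U h" "open U" "x \<in> U"
  shows "pd b (pd a h) x = pd a (pd b h) x"
  using assms by (intro pd_pd_commute[OF assms(2,3)]) (auto intro: smooth_on_imp_differentiable smooth_on_pd)

lemma smooth_on_pd_pd_pd_pd_commute:
  assumes f: "smooth_on U f" and U: "open U" "x \<in> U"
  shows "pd j (pd j (pd k (pd k f))) x = pd k (pd k (pd j (pd j f))) x"
proof -
  have "pd j (pd j (pd k (pd k f))) x = pd j (pd k (pd j (pd k f))) x"
    by (rule pd_cong_open[OF U]) (rule smooth_on_pd_pd_commute[OF smooth_on_pd[OF f] U(1)])
  also have "\<dots> = pd k (pd j (pd j (pd k f))) x"
    by (rule smooth_on_pd_pd_commute[OF smooth_on_pd[OF smooth_on_pd[OF f]] U])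
  also have "\<dots> = pd k (pd j (pd k (pd j f))) x"
    by (intro pd_cong_open[OF U] pd_cong_open[OF U(1)] smooth_on_pd_pd_commute[OF f U(1)])
  also have "\<dots> = pd k (pd k (pd j (pd j f))) x"
    by (rule pd_cong_open[OF U]) (rule smooth_on_pd_pd_commute[OF smooth_on_pd[OF f] U(1)])
  finally show ?thesis .
qed

section \<open>The coefficients of \<open>P(\<lambda>)\<close> along coordinate lines\<close>

lemma open_distinct_coords: "open (distinct_coords :: (real^'g::finite) set)"
proof -
  have eq: "(distinct_coords :: (real^'g) set) = (\<Inter>(j, k)\<in>{(j, k). j \<noteq> k}. {x. x $ j \<noteq> x $ k})"
    unfolding distinct_coords_def by auto
  show ?thesis
    unfolding eq by (intro open_INT ballI) (auto intro!: open_Collect_neq continuous_on_component continuous_on_id)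
qed

definition node_poly :: "complex \<Rightarrow> real^'g::finite \<Rightarrow> complex" where
  "node_poly l x = (\<Prod>i\<in>UNIV. l - complex_of_real (x $ i))"

definition node_poly_omit :: "complex \<Rightarrow> real^'g::finite \<Rightarrow> 'g \<Rightarrow> complex" where
  "node_poly_omit l x j = (\<Prod>i\<in>UNIV - {j}. l - complex_of_real (x $ i))"

definition P_coeff :: "real \<Rightarrow> (nat \<Rightarrow> complex) \<Rightarrow> complex \<Rightarrow> 'g::finite \<Rightarrow> real^'g \<Rightarrow> complex" where
  "P_coeff hbar a l k x =
     Spoly k x l * Qpoly a (CARD('g) + 1) (complex_of_real (x $ k)) * (\<i> * complex_of_real hbar)^2"

text \<open>For \<open>k \<noteq> j\<close> the formula comes from the partial fraction
  \<open>(\<lambda> - \<lambda>\<^sub>j - z)/(\<lambda>\<^sub>k - \<lambda>\<^sub>j - z) = 1 + (\<lambda> - \<lambda>\<^sub>k)/(\<lambda>\<^sub>k - \<lambda>\<^sub>j - z)\<close>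
  of the only factor of \<open>S\<^sub>k(\<lambda>)\<close> that depends on \<open>\<lambda>\<^sub>j\<close>.\<close>

definition coeff_profile ::
    "real \<Rightarrow> (nat \<Rightarrow> complex) \<Rightarrow> real^'g::finite \<Rightarrow> 'g \<Rightarrow> 'g \<Rightarrow> complex \<Rightarrow> complex" where
  "coeff_profile hbar a x j k z = (\<i> * complex_of_real hbar)^2 *
     (if k = j then Qpoly a (CARD('g) + 1) (complex_of_real (x $ j) + z)
                      / (\<Prod>m\<in>UNIV - {j}. complex_of_real (x $ j - x $ m) + z)
      else Qpoly a (CARD('g) + 1) (complex_of_real (x $ k))
             / ((complex_of_real (x $ k - x $ j) - z)
                * (\<Prod>m\<in>UNIV - {j, k}. complex_of_real (x $ k - x $ m))))"

lemma P_op_eq: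
  "P_op hbar a l f x = node_poly l x * f x + (\<Sum>k\<in>UNIV. P_coeff hbar a l k x * pd k (pd k f) x)"
  unfolding P_op_def node_poly_def P_coeff_def by simp

lemma node_poly_omit_along_line:
  "node_poly_omit l (x + s *\<^sub>R axis j 1) j = node_poly_omit l x j"
  unfolding node_poly_omit_def by (auto simp: axis_def)

lemma node_poly_along_line:
  fixes x :: "real^'g::finite"
  shows "node_poly l (x + s *\<^sub>R axis j 1) = node_poly l x + - node_poly_omit l x j * complex_of_real s"
proof -
  have split: "node_poly l y = (l - complex_of_real (y $ j)) * node_poly_omit l y j" for y :: "real^'g"
    unfolding node_poly_def node_poly_omit_def by (subst prod.remove[of UNIV j]) auto
  show ?thesis
    unfolding split[of "x + s *\<^sub>R axis j 1"] split[of x] node_poly_omit_along_line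
    by (simp add: axis_def algebra_simps)
qed

lemma P_coeff_diag: "P_coeff hbar a l j x = node_poly_omit l x j * coeff_profile hbar a x j j 0"
  unfolding P_coeff_def Spoly_def node_poly_omit_def coeff_profile_def by simp

lemma distinct_coords_along_line:
  assumes "x \<in> distinct_coords" "(\<Prod>m\<in>UNIV - {j}. complex_of_real (x $ j - x $ m) + complex_of_real s) \<noteq> 0"
  shows "x + s *\<^sub>R axis j 1 \<in> distinct_coords"
proof -
  have "x $ j + s \<noteq> x $ m" if "m \<noteq> j" for m
  proof
    assume "x $ j + s = x $ m"
    then have "complex_of_real (x $ j - x $ m + s) = 0"
      by (subst of_real_eq_0_iff) simp
    with assms(2) that show False by (auto simp del: of_real_eq_0_iff)
  qed
  with assms(1) show ?thesis
    unfolding distinct_coords_def by (auto simp: axis_def) metis+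
qed

lemma prod_remove_two:
  fixes f :: "'g::finite \<Rightarrow> 'a::comm_monoid_mult"
  assumes "j \<noteq> k"
  shows "(\<Prod>m\<in>UNIV - {k}. f m) = f j * (\<Prod>m\<in>UNIV - {j, k}. f m)"
proof -
  have "UNIV - {k} - {j} = UNIV - {j, k}" by auto
  then show ?thesis
    using assms by (subst prod.remove[of _ j]) auto
qed

lemma partial_fraction_split:
  fixes p q R D c :: "'a::field"
  assumes "p \<noteq> 0" "D \<noteq> 0"
  shows "(p + q) * R / (p * D) * c = R / D * c + q * R * (c / (p * D))"
  using assms by (simp add: field_simps)

lemma P_coeff_along_line:
  fixes x :: "real^'g::finite"
  assumes x: "x \<in> distinct_coords"
  shows "\<exists>\<alpha>. \<forall>s. x + s *\<^sub>R axis j 1 \<in> distinct_coords \<longrightarrow>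
           P_coeff hbar a l k (x + s *\<^sub>R axis j 1) = \<alpha> + node_poly_omit l x j * coeff_profile hbar a x j k s"
proof (cases "k = j")
  case True
  have "P_coeff hbar a l j (x + s *\<^sub>R axis j 1) = 0 + node_poly_omit l x j * coeff_profile hbar a x j j s"
    for s
  proof -
    have denominator:
      "(\<Prod>m\<in>UNIV - {j}. complex_of_real ((x + s *\<^sub>R axis j 1) $ j - (x + s *\<^sub>R axis j 1) $ m))
        = (\<Prod>m\<in>UNIV - {j}. complex_of_real (x $ j - x $ m) + complex_of_real s)"
      by (intro prod.cong) (auto simp: axis_def)
    have "(x + s *\<^sub>R axis j 1) $ j = x $ j + s"
      by (simp add: axis_def)
    then show ?thesis
      unfolding P_coeff_def Spoly_def coeff_profile_def node_poly_omit_def[symmetric]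
        node_poly_omit_along_line denominator
      by (simp add: mult_ac)
  qed
  with True show ?thesis by blast
next
  case False
  let ?y = "\<lambda>s. x + s *\<^sub>R axis j 1"
  let ?c = "Qpoly a (CARD('g) + 1) (complex_of_real (x $ k)) * (\<i> * complex_of_real hbar)^2"
  define R where "R = (\<Prod>m\<in>UNIV - {j, k}. l - complex_of_real (x $ m))"
  define D where "D = (\<Prod>m\<in>UNIV - {j, k}. complex_of_real (x $ k - x $ m))"
  have "D \<noteq> 0"
    using x unfolding D_def distinct_coords_def by auto
  have "P_coeff hbar a l k (?y s) = R / D * ?c + node_poly_omit l x j * coeff_profile hbar a x j k s"
    if "?y s \<in> distinct_coords" for s
  proof -
    have "?y s $ k \<noteq> ?y s $ j"
      using that False unfolding distinct_coords_def by blast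
    then have "x $ k - x $ j - s \<noteq> 0"
      using False by (simp add: axis_def)
    then have p: "complex_of_real (x $ k - x $ j) - complex_of_real s \<noteq> 0"
      by (metis of_real_diff of_real_eq_0_iff)
    have num: "(\<Prod>m\<in>UNIV - {k}. l - complex_of_real (?y s $ m)) = (l - complex_of_real (x $ j + s)) * R"
      unfolding prod_remove_two[OF not_sym[OF False]] R_def
      by (auto simp: axis_def False intro!: prod.cong)
    have den: "(\<Prod>m\<in>UNIV - {k}. complex_of_real (?y s $ k - ?y s $ m))
        = (complex_of_real (x $ k - x $ j) - complex_of_real s) * D"
      unfolding prod_remove_two[OF not_sym[OF False]] D_def
      by (auto simp: axis_def False intro!: prod.cong)
    let ?p = "complex_of_real (x $ k - x $ j) - complex_of_real s"
    let ?q = "l - complex_of_real (x $ k)"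
    have "P_coeff hbar a l k (?y s) = (?p + ?q) * R / (?p * D) * ?c"
      unfolding P_coeff_def Spoly_def num den using False by (simp add: axis_def)
    also have "\<dots> = R / D * ?c + ?q * R * (?c / (?p * D))"
      using p \<open>D \<noteq> 0\<close> by (rule partial_fraction_split)
    also have "\<dots> = R / D * ?c + node_poly_omit l x j * coeff_profile hbar a x j k s"
      unfolding node_poly_omit_def coeff_profile_def prod_remove_two[OF False] R_def D_def
      using False by (simp add: insert_commute mult_ac)
    finally show ?thesis .
  qed
  then show ?thesis by blast
qed

lemma coeff_profile_holomorphic:
  assumes x: "x \<in> distinct_coords"
  shows "coeff_profile hbar a x j k holomorphic_on
           {z. (\<Prod>m\<in>UNIV - {j}. complex_of_real (x $ j - x $ m) + z) \<noteq> 0}"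
proof (cases "k = j")
  case True
  then show ?thesis
    unfolding coeff_profile_def Qpoly_def by (auto intro!: holomorphic_intros)
next
  case False
  have "complex_of_real (x $ k - x $ j) - z \<noteq> 0"
    if "(\<Prod>m\<in>UNIV - {j}. complex_of_real (x $ j - x $ m) + z) \<noteq> 0" for z
  proof -
    have "complex_of_real (x $ j - x $ k) + z \<noteq> 0"
      using that False by auto
    then show ?thesis
      by (simp add: algebra_simps)
  qed
  moreover have "(\<Prod>m\<in>UNIV - {j, k}. complex_of_real (x $ k - x $ m)) \<noteq> 0"
    using x unfolding distinct_coords_def by auto
  ultimately show ?thesis
    unfolding coeff_profile_def using False by (auto intro!: holomorphic_intros)
qed

lemma P_coeff_has_jet2:
  fixes x :: "real^'g::finite"
  assumes x: "x \<in> distinct_coords"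
  shows "has_jet2 (\<lambda>s. P_coeff hbar a l k (x + s *\<^sub>R axis j 1)) (P_coeff hbar a l k x)
           (node_poly_omit l x j * deriv (coeff_profile hbar a x j k) 0)
           (node_poly_omit l x j * deriv (deriv (coeff_profile hbar a x j k)) 0)"
proof -
  let ?S = "{z. (\<Prod>m\<in>UNIV - {j}. complex_of_real (x $ j - x $ m) + z) \<noteq> 0}"
  obtain \<alpha> where \<alpha>: "\<And>s. x + s *\<^sub>R axis j 1 \<in> distinct_coords \<Longrightarrow>
      P_coeff hbar a l k (x + s *\<^sub>R axis j 1) = \<alpha> + node_poly_omit l x j * coeff_profile hbar a x j k s"
    using P_coeff_along_line[OF x] by blast
  have "has_jet2 (\<lambda>s. P_coeff hbar a l k (x + s *\<^sub>R axis j 1)) (P_coeff hbar a l k (x + 0 *\<^sub>R axis j 1))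
           (node_poly_omit l x j * deriv (coeff_profile hbar a x j k) 0)
           (node_poly_omit l x j * deriv (deriv (coeff_profile hbar a x j k)) 0)"
  proof (rule has_jet2_holomorphic)
    show "open ?S" by (intro open_Collect_neq continuous_intros)
    show "0 \<in> ?S" using x unfolding distinct_coords_def by auto
    show "coeff_profile hbar a x j k holomorphic_on ?S"
      by (rule coeff_profile_holomorphic[OF x])
    show "P_coeff hbar a l k (x + s *\<^sub>R axis j 1) = \<alpha> + node_poly_omit l x j * coeff_profile hbar a x j k s"
      if "complex_of_real s \<in> ?S" for s
      using that by (intro \<alpha> distinct_coords_along_line[OF x]) simp
  qed
  then show ?thesis by simp
qed

lemma node_poly_has_jet2:
  "has_jet2 (\<lambda>s. node_poly l (x + s *\<^sub>R axis j 1)) (node_poly l x) (- node_poly_omit l x j) 0"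
  unfolding node_poly_along_line by (rule has_jet2_affine)

lemma pd_pd_P_op:
  fixes f :: "real^'g::finite \<Rightarrow> complex"
  assumes f: "smooth_on distinct_coords f" and x: "x \<in> distinct_coords"
  shows "\<exists>E. \<forall>l. pd j (pd j (P_op hbar a l f)) x =
           node_poly l x * pd j (pd j f) x + node_poly_omit l x j * E
           + (\<Sum>k\<in>UNIV. P_coeff hbar a l k x * pd j (pd j (pd k (pd k f))) x)"
proof (intro exI allI)
  fix l
  let ?w = "node_poly_omit l x j"
  let ?\<rho>1 = "\<lambda>k. deriv (coeff_profile hbar a x j k) 0"
  let ?\<rho>2 = "\<lambda>k. deriv (deriv (coeff_profile hbar a x j k)) 0"
  let ?F = "\<lambda>k. pd k (pd k f)"
  have smooth_jet: "has_jet2 (\<lambda>t. h (x + t *\<^sub>R axis j 1)) (h x) (pd j h x) (pd j (pd j h) x)"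
    if "smooth_on distinct_coords h" for h
    using that by (intro has_jet2_along_line_pd[OF open_distinct_coords x])
      (auto intro: smooth_on_imp_differentiable smooth_on_pd)
  have "has_jet2 (\<lambda>t. P_op hbar a l f (x + t *\<^sub>R axis j 1))
      (node_poly l x * f x + (\<Sum>k\<in>UNIV. P_coeff hbar a l k x * ?F k x))
      (node_poly l x * pd j f x + - ?w * f x
         + (\<Sum>k\<in>UNIV. P_coeff hbar a l k x * pd j (?F k) x + ?w * ?\<rho>1 k * ?F k x))
      (node_poly l x * pd j (pd j f) x + 2 * - ?w * pd j f x + 0 * f x
         + (\<Sum>k\<in>UNIV. P_coeff hbar a l k x * pd j (pd j (?F k)) x
              + 2 * (?w * ?\<rho>1 k) * pd j (?F k) x + ?w * ?\<rho>2 k * ?F k x))"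
    unfolding P_op_eq
    by (intro has_jet2_add has_jet2_mult has_jet2_sum node_poly_has_jet2 P_coeff_has_jet2 x
        smooth_jet smooth_on_pd f) simp
  from has_jet2_imp_pd_pd[OF this]
  show "pd j (pd j (P_op hbar a l f)) x =
      node_poly l x * pd j (pd j f) x
      + ?w * (- 2 * pd j f x + (\<Sum>k\<in>UNIV. 2 * ?\<rho>1 k * pd j (?F k) x + ?\<rho>2 k * ?F k x))
      + (\<Sum>k\<in>UNIV. P_coeff hbar a l k x * pd j (pd j (?F k)) x)"
    by (simp add: sum.distrib sum_distrib_left algebra_simps)
qed

lemma P_op_P_op_expansion:
  fixes f :: "real^'g::finite \<Rightarrow> complex"
  assumes f: "smooth_on distinct_coords f" and x: "x \<in> distinct_coords"
  shows "\<exists>E. \<forall>l l'. P_op hbar a l (P_op hbar a l' f) x =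
           node_poly l x * node_poly l' x * f x
           + (\<Sum>k\<in>UNIV. (node_poly l x * P_coeff hbar a l' k x + P_coeff hbar a l k x * node_poly l' x)
                          * pd k (pd k f) x)
           + (\<Sum>j\<in>UNIV. node_poly_omit l x j * node_poly_omit l' x j * E j)
           + (\<Sum>j\<in>UNIV. \<Sum>k\<in>UNIV. P_coeff hbar a l j x * P_coeff hbar a l' k x
                                       * pd j (pd j (pd k (pd k f))) x)"
proof -
  have "\<forall>j. \<exists>e. \<forall>l. pd j (pd j (P_op hbar a l f)) x =
      node_poly l x * pd j (pd j f) x + node_poly_omit l x j * e
      + (\<Sum>k\<in>UNIV. P_coeff hbar a l k x * pd j (pd j (pd k (pd k f))) x)"
    using pd_pd_P_op[OF f x] by blast
  from choice[OF this] obtain E where E: "\<And>j l. pd j (pd j (P_op hbar a l f)) x =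
      node_poly l x * pd j (pd j f) x + node_poly_omit l x j * E j
      + (\<Sum>k\<in>UNIV. P_coeff hbar a l k x * pd j (pd j (pd k (pd k f))) x)"
    by blast
  have "P_op hbar a l (P_op hbar a l' f) x =
      node_poly l x * node_poly l' x * f x
      + (\<Sum>k\<in>UNIV. (node_poly l x * P_coeff hbar a l' k x + P_coeff hbar a l k x * node_poly l' x)
                     * pd k (pd k f) x)
      + (\<Sum>j\<in>UNIV. P_coeff hbar a l j x * node_poly_omit l' x j * E j)
      + (\<Sum>j\<in>UNIV. \<Sum>k\<in>UNIV. P_coeff hbar a l j x * P_coeff hbar a l' k x
                                  * pd j (pd j (pd k (pd k f))) x)" for l l'
    unfolding P_op_eq[of _ _ l] E P_op_eq[of _ _ l' f x]
    by (simp add: sum.distrib sum_distrib_left algebra_simps)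
  then show ?thesis
    unfolding P_coeff_diag[of _ _ _ _ x]
    by (intro exI[of _ "\<lambda>j. coeff_profile hbar a x j j 0 * E j"]) (simp add: mult_ac)
qed

theorem mainTheorem5:
  fixes hbar :: real and a :: "nat \<Rightarrow> complex" and l l' :: complex
    and f :: "real^'g::finite \<Rightarrow> complex"
  assumes "smooth_on distinct_coords f"
  shows "\<forall>x\<in>distinct_coords.
           P_op hbar a l (P_op hbar a l' f) x = P_op hbar a l' (P_op hbar a l f) x"
proof
  fix x :: "real^'g" assume x: "x \<in> distinct_coords"
  have "(\<Sum>j\<in>UNIV. \<Sum>k\<in>UNIV. P_coeff hbar a l j x * P_coeff hbar a l' k x * pd j (pd j (pd k (pd k f))) x)
      = (\<Sum>j\<in>UNIV. \<Sum>k\<in>UNIV. P_coeff hbar a l' j x * P_coeff hbar a l k x * pd j (pd j (pd k (pd k f))) x)"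
    by (subst sum.swap)
       (simp add: smooth_on_pd_pd_pd_pd_commute[OF assms open_distinct_coords x] mult.commute)
  with P_op_P_op_expansion[OF assms x, of hbar a]
  show "P_op hbar a l (P_op hbar a l' f) x = P_op hbar a l' (P_op hbar a l f) x"
    by (auto simp: ac_simps)
qed

end
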